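(* Let $N \ge \Delta \ge 1$ be integers. Then: (1) $g(N,1)=0$. (2) If $\Delta \geq 2$ and $N-1 \equiv k \pmod{\Delta - 1}$ with $0 \leq k \leq \Delta -2$, then $g(N,\Delta) = \frac{(N-k-1)\Delta}{2} + \binom{k+1}{2} \leq \frac{(N-1)\Delta}{2}$. (3) If $\Delta \geq 2$, then $g(N+1,\Delta) \geq g(N,\Delta)+1$. (4) If $N > \Delta$, then $g(N,\Delta+1) \geq g(N,\Delta)+1$.
   Context: All graphs are finite and simple; $L(F)$ is the line graph of $F$, $e(\cdot)$ the number of edges, $\Delta(\cdot)$ the maximum degree, $\delta(\cdot)$ the minimum degree. For integers $N \ge \Delta \ge 1$, $g(N,\Delta) = \max\{ e(L(F)) : F \text{ acyclic}, e(F)=N, \Delta(F)=\Delta, \delta(F)\geq 1\}$. *)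

theory Defs
  imports Complex_Main "HOL-Number_Theory.Cong"
begin

text \<open>A finite simple graph is represented by its edge set: a finite set of
  2-element subsets of nat. Since delta(F) >= 1 (no isolated vertices), the vertex
  set is exactly the union of the edges.\<close>

definition simple_graph :: "nat set set \<Rightarrow> bool" where
  "simple_graph E \<longleftrightarrow> finite E \<and> (\<forall>e\<in>E. card e = 2)"

definition verts :: "nat set set \<Rightarrow> nat set" where
  "verts E = \<Union>E"

definition degree :: "nat set set \<Rightarrow> nat \<Rightarrow> nat" where
  "degree E v = card {e\<in>E. v \<in> e}"

definition max_degree :: "nat set set \<Rightarrow> nat" where
  "max_degree E = Max (degree E ` verts E)"

definition has_cycle :: "nat set set \<Rightarrow> bool" where
  "has_cycle E \<longleftrightarrow> (\<exists>vs. length vs \<ge> 3 \<and> distinct vs \<and>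
      (\<forall>i < length vs - 1. {vs ! i, vs ! Suc i} \<in> E) \<and> {last vs, hd vs} \<in> E)"

definition acyclic_graph :: "nat set set \<Rightarrow> bool" where
  "acyclic_graph E \<longleftrightarrow> simple_graph E \<and> \<not> has_cycle E"

definition line_graph_edges :: "nat set set \<Rightarrow> nat set set set" where
  "line_graph_edges E = {{e1, e2} | e1 e2. e1 \<in> E \<and> e2 \<in> E \<and> e1 \<noteq> e2 \<and> e1 \<inter> e2 \<noteq> {}}"

definition eL :: "nat set set \<Rightarrow> nat" where
  "eL E = card (line_graph_edges E)"

text \<open>delta(F) >= 1 holds automatically since verts E is the union of the edges.\<close>
definition g :: "nat \<Rightarrow> nat \<Rightarrow> nat" where
  "g N D = Max {eL F | F. acyclic_graph F \<and> card F = N \<and> max_degree F = D}"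

end

theory Submission
  imports Defs
begin

text \<open>Write d(v) = x_v + 1. Then e(L(F)) = \<Sum>v. C(d(v), 2) = \<Sum>v. x_v (x_v + 1) / 2 with
  x_v \<le> \<Delta> - 1 =: m, and in a forest with N edges, which has at least N + 1 vertices,
  \<Sum>v. x_v = 2 N - |V| \<le> N - 1. By convexity of x (x + 1), the sum is largest when as many x_v
  as possible equal m, giving q m (m + 1) + k (k + 1) for N - 1 = q m + k. A caterpillar whose
  spine vertices receive leaves one at a time until they reach degree \<Delta> attains this bound.
  Parts (3) and (4) are monotonicity properties of the bound, and for \<Delta> = 1 the forests are
  matchings.\<close>

section \<open>Degrees and the line graph\<close>

lemma simple_graph_finite_verts: "simple_graph E \<Longrightarrow> finite (verts E)"
  unfolding simple_graph_def verts_def by (metis card.infinite finite_Union zero_neq_numeral)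

lemma card_2_obtain_other:
  assumes "card e = 2" "y \<in> e"
  obtains z where "e = {y, z}" "z \<noteq> y"
proof -
  obtain a b where ab: "e = {a, b}" "a \<noteq> b" using assms(1) by (metis card_2_iff)
  show thesis
  proof (cases "y = a")
    case True
    then show thesis using ab that by blast
  next
    case False
    then have "e = {y, a}" using ab assms(2) by auto
    then show thesis using False that by blast
  qed
qed

lemma simple_graph_edge_eq:
  assumes "simple_graph E" "e \<in> E" "v \<in> e" "w \<in> e" "v \<noteq> w"
  shows "e = {v, w}"
proof -
  obtain a b where "e = {a, b}" using assms(1,2) unfolding simple_graph_def by (metis card_2_iff)
  then show ?thesis using assms(3-5) by auto
qed

lemma degree_insert:
  assumes "a \<notin> E" "finite E"
  shows "degree (insert a E) v = degree E v + (if v \<in> a then 1 else 0)"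
proof (cases "v \<in> a")
  case True
  then have "{e\<in>insert a E. v \<in> e} = insert a {e\<in>E. v \<in> e}" by auto
  then show ?thesis using assms True unfolding degree_def by simp
next
  case False
  then have "{e\<in>insert a E. v \<in> e} = {e\<in>E. v \<in> e}" by auto
  then show ?thesis using False unfolding degree_def by simp
qed

lemma degree_mono: "E \<subseteq> E' \<Longrightarrow> finite E' \<Longrightarrow> degree E v \<le> degree E' v"
  unfolding degree_def by (rule card_mono) auto

lemma degree_notin_verts: "v \<notin> verts E \<Longrightarrow> degree E v = 0"
proof -
  assume "v \<notin> verts E"
  then have "{e\<in>E. v \<in> e} = {}" unfolding verts_def by blast
  then show ?thesis unfolding degree_def by (simp only: card.empty)
qed

lemma degree_ge_1:
  assumes "finite E" "v \<in> verts E"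
  shows "degree E v \<ge> 1"
proof -
  obtain e where "e \<in> E" "v \<in> e" using assms(2) unfolding verts_def by blast
  then show ?thesis unfolding degree_def using assms(1) by (auto simp: Suc_le_eq card_gt_0_iff)
qed

lemma degree_le_max_degree:
  "simple_graph E \<Longrightarrow> v \<in> verts E \<Longrightarrow> degree E v \<le> max_degree E"
  unfolding max_degree_def by (simp add: simple_graph_finite_verts)

lemma max_degree_eqI:
  assumes "simple_graph E" "v \<in> verts E" "degree E v = d" "\<And>u. degree E u \<le> d"
  shows "max_degree E = d"
  unfolding max_degree_def using assms simple_graph_finite_verts[OF assms(1)]
  by (intro Max_eqI) (auto intro: image_eqI[where x = v])

definition line_graph_edges_at :: "nat set set \<Rightarrow> nat \<Rightarrow> nat set set set" where
  "line_graph_edges_at E v = {B. B \<subseteq> {e\<in>E. v \<in> e} \<and> card B = 2}"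

lemma line_graph_edges_eq_UN:
  "line_graph_edges E = (\<Union>v\<in>verts E. line_graph_edges_at E v)"
proof
  show "line_graph_edges E \<subseteq> (\<Union>v\<in>verts E. line_graph_edges_at E v)"
  proof
    fix L assume "L \<in> line_graph_edges E"
    then obtain e1 e2 v where L: "L = {e1, e2}" "e1 \<in> E" "e2 \<in> E" "e1 \<noteq> e2" "v \<in> e1" "v \<in> e2"
      unfolding line_graph_edges_def by blast
    then have "v \<in> verts E" "L \<in> line_graph_edges_at E v"
      unfolding verts_def line_graph_edges_at_def by auto
    then show "L \<in> (\<Union>v\<in>verts E. line_graph_edges_at E v)" by blast
  qed
  show "(\<Union>v\<in>verts E. line_graph_edges_at E v) \<subseteq> line_graph_edges E"
  proof
    fix L assume "L \<in> (\<Union>v\<in>verts E. line_graph_edges_at E v)"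
    then obtain v where v: "L \<subseteq> {e\<in>E. v \<in> e}" "card L = 2"
      unfolding line_graph_edges_at_def by blast
    then obtain e1 e2 where "L = {e1, e2}" "e1 \<noteq> e2" by (metis card_2_iff)
    then show "L \<in> line_graph_edges E" using v unfolding line_graph_edges_def by blast
  qed
qed

lemma disjoint_line_graph_edges_at:
  assumes "simple_graph E" "v \<noteq> w"
  shows "line_graph_edges_at E v \<inter> line_graph_edges_at E w = {}"
proof -
  have False if B: "B \<subseteq> {e\<in>E. v \<in> e}" "B \<subseteq> {e\<in>E. w \<in> e}" "card B = 2" for B
  proof -
    obtain e1 e2 where e: "B = {e1, e2}" "e1 \<noteq> e2" using B(3) by (metis card_2_iff)
    then have "e1 = {v, w}" "e2 = {v, w}"
      using B simple_graph_edge_eq[OF assms(1) _ _ _ assms(2)] by auto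
    then show False using e(2) by simp
  qed
  then show ?thesis unfolding line_graph_edges_at_def by blast
qed

lemma card_line_graph_edges_at:
  "finite E \<Longrightarrow> card (line_graph_edges_at E v) = degree E v choose 2"
  unfolding line_graph_edges_at_def degree_def by (simp add: n_subsets)

lemma eL_eq_sum_choose_degree:
  assumes "simple_graph E"
  shows "eL E = (\<Sum>v\<in>verts E. degree E v choose 2)"
proof -
  have "finite E" using assms unfolding simple_graph_def by simp
  then show ?thesis
    unfolding eL_def line_graph_edges_eq_UN
    using assms simple_graph_finite_verts disjoint_line_graph_edges_at card_line_graph_edges_at
    by (subst card_UN_disjoint) (auto simp: line_graph_edges_at_def)
qed

lemma eL_eq_0_of_max_degree_le_1:
  assumes "simple_graph F" "max_degree F \<le> 1"
  shows "eL F = 0"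
proof -
  have "degree F v choose 2 = 0" if "v \<in> verts F" for v
    using degree_le_max_degree[OF assms(1) that] assms(2) by (simp add: binomial_eq_0)
  then show ?thesis unfolding eL_eq_sum_choose_degree[OF assms(1)] by (intro sum.neutral) blast
qed

lemma finite_line_graph_edges: "finite E \<Longrightarrow> finite (line_graph_edges E)"
  unfolding line_graph_edges_def by (rule finite_subset[of _ "Pow E"]) auto

lemma line_graph_edges_insert:
  assumes "a \<notin> E"
  shows "line_graph_edges (insert a E)
    = line_graph_edges E \<union> (\<lambda>e. {a, e}) ` {e\<in>E. a \<inter> e \<noteq> {}}" (is "_ = ?R")
proof
  show "line_graph_edges (insert a E) \<subseteq> ?R"
  proof
    fix L assume "L \<in> line_graph_edges (insert a E)"
    then obtain e1 e2 where L: "L = {e1, e2}" "e1 \<in> insert a E" "e2 \<in> insert a E"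
      "e1 \<noteq> e2" "e1 \<inter> e2 \<noteq> {}"
      unfolding line_graph_edges_def by blast
    consider "e1 = a" | "e2 = a" | "e1 \<in> E" "e2 \<in> E" using L by blast
    then show "L \<in> ?R"
    proof cases
      case 1
      then show ?thesis using L by blast
    next
      case 2
      then have "L = {a, e1}" "e1 \<in> E" "a \<inter> e1 \<noteq> {}" using L by auto
      then show ?thesis by blast
    next
      case 3
      then show ?thesis using L unfolding line_graph_edges_def by blast
    qed
  qed
  show "?R \<subseteq> line_graph_edges (insert a E)"
  proof
    fix L assume "L \<in> ?R"
    then show "L \<in> line_graph_edges (insert a E)"
    proof
      assume "L \<in> line_graph_edges E"
      then show ?thesis unfolding line_graph_edges_def by blast
    next
      assume "L \<in> (\<lambda>e. {a, e}) ` {e\<in>E. a \<inter> e \<noteq> {}}"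
      then obtain e where "L = {a, e}" "e \<in> E" "a \<inter> e \<noteq> {}" by blast
      moreover have "a \<noteq> e" using assms \<open>e \<in> E\<close> by blast
      ultimately show ?thesis unfolding line_graph_edges_def by blast
    qed
  qed
qed

lemma card_line_graph_edges_insert:
  assumes "finite E" "a \<notin> E"
  shows "card (line_graph_edges (insert a E))
    = card (line_graph_edges E) + card {e\<in>E. a \<inter> e \<noteq> {}}"
proof -
  have "L \<subseteq> E" if "L \<in> line_graph_edges E" for L
    using that unfolding line_graph_edges_def by blast
  then have "line_graph_edges E \<inter> (\<lambda>e. {a, e}) ` {e\<in>E. a \<inter> e \<noteq> {}} = {}"
    using assms(2) by blast
  moreover have "inj_on (\<lambda>e. {a, e}) {e\<in>E. a \<inter> e \<noteq> {}}"
    using assms(2) by (intro inj_onI) (auto simp: doubleton_eq_iff)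
  ultimately show ?thesis
    using assms by (simp add: line_graph_edges_insert card_Un_disjoint finite_line_graph_edges card_image)
qed

lemma eL_insert_pendant:
  assumes "finite E" "w \<notin> verts E"
  shows "eL (insert {u, w} E) = eL E + degree E u"
proof -
  have "{u, w} \<notin> E" using assms(2) unfolding verts_def by blast
  moreover have "{e\<in>E. {u, w} \<inter> e \<noteq> {}} = {e\<in>E. u \<in> e}"
    using assms(2) unfolding verts_def by blast
  ultimately show ?thesis
    using card_line_graph_edges_insert[OF assms(1)] unfolding eL_def degree_def by simp
qed

section \<open>Forests\<close>

lemma has_cycle_mono: "E' \<subseteq> E \<Longrightarrow> has_cycle E' \<Longrightarrow> has_cycle E"
  unfolding has_cycle_def by blast

lemma cycle_vertex_has_two_neighbours:
  assumes len: "length vs \<ge> 3" and dist: "distinct vs"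
    and ed: "\<forall>i < length vs - 1. {vs!i, vs!Suc i} \<in> E" and cl: "{last vs, hd vs} \<in> E"
    and x: "x \<in> set vs"
  shows "\<exists>a b. a \<noteq> b \<and> {x, a} \<in> E \<and> {x, b} \<in> E"
proof -
  obtain i where i: "i < length vs" "x = vs!i" by (metis in_set_conv_nth x)
  define n where "n = length vs"
  have ne: "vs \<noteq> []" using len by auto
  have hd: "hd vs = vs!0" using ne by (simp add: hd_conv_nth)
  have last: "last vs = vs!(n-1)" using ne by (simp add: last_conv_nth n_def)
  have neq: "\<And>j l. j < n \<Longrightarrow> l < n \<Longrightarrow> j \<noteq> l \<Longrightarrow> vs!j \<noteq> vs!l"
    using dist n_def by (simp add: nth_eq_iff_index_eq)
  consider "i = 0" | "i = n-1" | "0 < i \<and> i < n-1" using i n_def by linarith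
  then show ?thesis
  proof cases
    case 1
    have "{x, vs!1} \<in> E" using ed 1 i len n_def by auto
    moreover have "{x, vs!(n-1)} \<in> E" using cl 1 i hd last by (simp add: insert_commute)
    moreover have "vs!1 \<noteq> vs!(n-1)" using neq len n_def by auto
    ultimately show ?thesis by blast
  next
    case 2
    have "{vs!(n-2), vs!Suc (n-2)} \<in> E" using ed len n_def by auto
    moreover have "Suc (n-2) = n-1" using len n_def by auto
    ultimately have "{x, vs!(n-2)} \<in> E" using 2 i by (simp add: insert_commute)
    moreover have "{x, vs!0} \<in> E" using cl 2 i hd last by simp
    moreover have "vs!(n-2) \<noteq> vs!0" by (intro neq) (use len n_def in auto)
    ultimately show ?thesis by blast
  next
    case 3
    have "i - 1 < length vs - 1" using 3 n_def by auto
    then have "{vs!(i-1), vs!Suc (i-1)} \<in> E" using ed by blast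
    moreover have "Suc (i-1) = i" using 3 by auto
    ultimately have "{x, vs!(i-1)} \<in> E" using i by (simp add: insert_commute)
    moreover have "{x, vs!Suc i} \<in> E" using ed 3 i n_def by auto
    moreover have "vs!(i-1) \<noteq> vs!Suc i" using neq 3 n_def by auto
    ultimately show ?thesis by blast
  qed
qed

lemma acyclic_graph_insert_pendant:
  assumes ac: "acyclic_graph E" and uw: "u \<noteq> w" and w: "w \<notin> verts E"
  shows "acyclic_graph (insert {u, w} E)"
proof -
  have "\<not> has_cycle (insert {u, w} E)"
  proof
    assume "has_cycle (insert {u, w} E)"
    then obtain vs where len: "length vs \<ge> 3" and dist: "distinct vs"
      and ed: "\<forall>i < length vs - 1. {vs!i, vs!Suc i} \<in> insert {u, w} E"
      and cl: "{last vs, hd vs} \<in> insert {u, w} E"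
      unfolding has_cycle_def by blast
    show False
    proof (cases "w \<in> set vs")
      case True
      text \<open>w would need two distinct neighbours, but u is its only one.\<close>
      from cycle_vertex_has_two_neighbours[OF len dist ed cl True] obtain a b where
        ab: "a \<noteq> b" "{w, a} \<in> insert {u, w} E" "{w, b} \<in> insert {u, w} E" by blast
      have "{w, a} \<notin> E" "{w, b} \<notin> E" using w unfolding verts_def by auto
      then have "a = u" "b = u" using ab uw by (auto simp: doubleton_eq_iff)
      then show False using ab by simp
    next
      case False
      have "\<forall>i < length vs - 1. {vs!i, vs!Suc i} \<in> E"
      proof (intro allI impI)
        fix i assume "i < length vs - 1"
        then have "{vs!i, vs!Suc i} \<in> insert {u, w} E" "vs!Suc i \<in> set vs" "vs!i \<in> set vs"
          using ed by auto
        then show "{vs!i, vs!Suc i} \<in> E" using False by (auto simp: doubleton_eq_iff)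
      qed
      moreover have "vs \<noteq> []" using len by auto
      then have "{last vs, hd vs} \<in> E" using cl False by (auto simp: doubleton_eq_iff)
      ultimately have "has_cycle E" using len dist unfolding has_cycle_def by blast
      then show False using ac unfolding acyclic_graph_def by simp
    qed
  qed
  then show ?thesis using ac uw unfolding acyclic_graph_def simple_graph_def by auto
qed

definition is_path :: "nat set set \<Rightarrow> nat list \<Rightarrow> bool" where
  "is_path E vs \<longleftrightarrow> distinct vs \<and> (\<forall>i < length vs - 1. {vs!i, vs!Suc i} \<in> E)"

lemma set_path_subset_verts:
  assumes "is_path E vs" "length vs \<ge> 2"
  shows "set vs \<subseteq> verts E"
proof
  fix x assume "x \<in> set vs"
  then obtain i where i: "i < length vs" "x = vs!i" by (metis in_set_conv_nth)
  show "x \<in> verts E"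
  proof (cases "i < length vs - 1")
    case True
    then have "{vs!i, vs!Suc i} \<in> E" using assms unfolding is_path_def by blast
    then show ?thesis using i unfolding verts_def by blast
  next
    case False
    then have "i - 1 < length vs - 1" "Suc (i-1) = i" using i assms(2) by auto
    then have "{vs!(i-1), vs!i} \<in> E" using assms unfolding is_path_def by metis
    then show ?thesis using i unfolding verts_def by blast
  qed
qed

lemma is_path_snoc:
  assumes p: "is_path E vs" and ne: "vs \<noteq> []" and z: "z \<notin> set vs" and e: "{last vs, z} \<in> E"
  shows "is_path E (vs @ [z])"
  unfolding is_path_def
proof (intro conjI allI impI)
  show "distinct (vs @ [z])" using p z unfolding is_path_def by simp
  fix i assume i: "i < length (vs @ [z]) - 1"
  show "{(vs @ [z]) ! i, (vs @ [z]) ! Suc i} \<in> E"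
  proof (cases "Suc i < length vs")
    case True
    then show ?thesis using p unfolding is_path_def by (simp add: nth_append)
  next
    case False
    then have "i < length vs" "i = length vs - 1" using i by auto
    then have "(vs @ [z]) ! i = last vs" "(vs @ [z]) ! Suc i = z"
      using ne by (auto simp: last_conv_nth nth_append)
    then show ?thesis using e by simp
  qed
qed

lemma acyclic_path_end_neighbour_notin:
  assumes nc: "\<not> has_cycle E" and p: "is_path E vs" and len: "length vs \<ge> 2"
    and e: "{last vs, z} \<in> E" and z: "z \<noteq> last vs" "z \<noteq> vs ! (length vs - 2)"
  shows "z \<notin> set vs"
proof
  assume "z \<in> set vs"
  then obtain j where j: "j < length vs" "vs ! j = z" by (metis in_set_conv_nth)
  have "last vs = vs ! (length vs - 1)" using len by (subst last_conv_nth) auto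
  then have jn: "j + 3 \<le> length vs" using j z by (cases "j = length vs - 1"; cases "j = length vs - 2") auto
  text \<open>The segment of the path from z to its end closes up to a cycle.\<close>
  define ws where "ws = drop j vs"
  have "length ws \<ge> 3" "distinct ws" using jn p unfolding ws_def is_path_def by auto
  moreover have "\<forall>i < length ws - 1. {ws!i, ws!Suc i} \<in> E"
    using p jn unfolding ws_def is_path_def by (auto simp: add.commute[of j])
  moreover have "{last ws, hd ws} \<in> E"
    using e j jn unfolding ws_def by (simp add: hd_drop_conv_nth)
  ultimately show False using nc unfolding has_cycle_def by blast
qed

lemma simple_graph_longest_path:
  assumes sg: "simple_graph E" and ne: "E \<noteq> {}"
  obtains vs where "is_path E vs" "length vs \<ge> 2"
    "\<And>ws. is_path E ws \<Longrightarrow> length ws \<ge> 2 \<Longrightarrow> length ws \<le> length vs"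
proof -
  obtain e0 where "e0 \<in> E" using ne by blast
  then obtain a b where ab: "{a, b} \<in> E" "a \<noteq> b" using sg unfolding simple_graph_def by (metis card_2_iff)
  let ?P = "\<lambda>vs. is_path E vs \<and> length vs \<ge> 2"
  have "?P [a, b]" using ab unfolding is_path_def by (auto simp: less_Suc_eq)
  moreover have "\<forall>vs. ?P vs \<longrightarrow> length vs < Suc (card (verts E))"
  proof (intro allI impI)
    fix vs assume path: "?P vs"
    then have "set vs \<subseteq> verts E" using set_path_subset_verts[of E vs] by blast
    moreover have "distinct vs" using path unfolding is_path_def by blast
    ultimately show "length vs < Suc (card (verts E))"
      using simple_graph_finite_verts[OF sg] by (metis card_mono distinct_card less_Suc_eq_le)
  qed
  ultimately obtain vs where "?P vs" "\<forall>ws. ?P ws \<longrightarrow> length ws \<le> length vs"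
    using ex_has_greatest_nat[of ?P "[a, b]" length] by blast
  then show thesis using that by blast
qed

text \<open>The end of a longest path is a leaf: another neighbour would extend the path or close a
  cycle.\<close>

lemma acyclic_graph_has_leaf:
  assumes ac: "acyclic_graph E" and ne: "E \<noteq> {}"
  obtains y where "y \<in> verts E" "degree E y = 1"
proof -
  have sg: "simple_graph E" and nc: "\<not> has_cycle E" using ac unfolding acyclic_graph_def by auto
  obtain vs where P: "is_path E vs" "length vs \<ge> 2"
    and longest: "\<And>ws. is_path E ws \<Longrightarrow> length ws \<ge> 2 \<Longrightarrow> length ws \<le> length vs"
    using simple_graph_longest_path[OF sg ne] by blast
  define y where "y = last vs"
  define p where "p = vs ! (length vs - 2)"
  have "vs \<noteq> []" "length vs - 2 < length vs - 1" "Suc (length vs - 2) = length vs - 1"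
    using P by auto
  moreover have "{vs ! i, vs ! Suc i} \<in> E" if "i < length vs - 1" for i
    using P that unfolding is_path_def by blast
  ultimately have "{p, y} \<in> E" unfolding p_def y_def by (metis last_conv_nth)
  have "e = {p, y}" if e: "e \<in> E" "y \<in> e" for e
  proof -
    obtain z where z: "e = {y, z}" "z \<noteq> y"
      using e sg card_2_obtain_other unfolding simple_graph_def by metis
    have "z = p"
    proof (rule ccontr)
      assume "z \<noteq> p"
      then have "z \<notin> set vs"
        using acyclic_path_end_neighbour_notin[OF nc] P e z unfolding y_def p_def by blast
      then have "is_path E (vs @ [z])"
        using is_path_snoc[OF P(1) \<open>vs \<noteq> []\<close>] e z unfolding y_def by simp
      then show False using longest[of "vs @ [z]"] P by simp
    qed
    then show ?thesis using z by auto
  qed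
  then have "{e\<in>E. y \<in> e} = {{p, y}}" using \<open>{p, y} \<in> E\<close> by blast
  then have "degree E y = 1" unfolding degree_def by simp
  moreover have "y \<in> verts E" using \<open>{p, y} \<in> E\<close> unfolding verts_def by blast
  ultimately show thesis using that by blast
qed

lemma acyclic_graph_card_verts:
  "acyclic_graph E \<Longrightarrow> E \<noteq> {} \<Longrightarrow> card E + 1 \<le> card (verts E)"
proof (induction "card E" arbitrary: E rule: less_induct)
  case less
  have sg: "simple_graph E" using less.prems unfolding acyclic_graph_def by blast
  then have fE: "finite E" and fv: "finite (verts E)"
    using simple_graph_finite_verts unfolding simple_graph_def by auto
  obtain y where y: "y \<in> verts E" "degree E y = 1" using acyclic_graph_has_leaf less.prems by blast
  then obtain e where e: "{e'\<in>E. y \<in> e'} = {e}" unfolding degree_def by (auto simp: card_1_singleton_iff)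
  then have "e \<in> E" by blast
  define E' where "E' = E - {e}"
  have "simple_graph E'" using sg unfolding simple_graph_def E'_def by auto
  moreover have "\<not> has_cycle E'"
    using less.prems(1) has_cycle_mono[of E' E] unfolding acyclic_graph_def E'_def by blast
  ultimately have ac': "acyclic_graph E'" unfolding acyclic_graph_def by blast
  have cE: "card E \<ge> 1" using \<open>e \<in> E\<close> fE by (simp add: Suc_le_eq card_gt_0_iff) blast
  have cE': "card E' = card E - 1" using \<open>e \<in> E\<close> fE unfolding E'_def by (simp add: card_Diff_singleton)
  have "verts E' \<subseteq> verts E - {y}" using e unfolding verts_def E'_def by blast
  then have "card (verts E') \<le> card (verts E - {y})" using fv by (simp add: card_mono)
  also have "\<dots> = card (verts E) - 1" using fv y(1) by simp
  finally have vE': "card (verts E') \<le> card (verts E) - 1" .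
  show ?case
  proof (cases "E' = {}")
    case True
    then have "E = {e}" using \<open>e \<in> E\<close> unfolding E'_def by blast
    then show ?thesis using sg unfolding verts_def simple_graph_def by simp
  next
    case False
    have "card E' < card E" using cE cE' by simp
    then have "card E' + 1 \<le> card (verts E')" using less.hyps ac' False by blast
    then show ?thesis using cE cE' vE' by linarith
  qed
qed

lemma sum_degree_verts:
  assumes "simple_graph E"
  shows "(\<Sum>v\<in>verts E. degree E v) = 2 * card E"
proof -
  have fE: "finite E" and card_e: "\<And>e. e \<in> E \<Longrightarrow> card e = 2"
    using assms unfolding simple_graph_def by auto
  have "\<forall>e\<in>E. card {v\<in>verts E. v \<in> e} = 2"
  proof
    fix e assume "e \<in> E"
    then have "{v\<in>verts E. v \<in> e} = e" unfolding verts_def by blast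
    then show "card {v\<in>verts E. v \<in> e} = 2" using card_e \<open>e \<in> E\<close> by simp
  qed
  then show ?thesis unfolding degree_def
    using sum_multicount[OF simple_graph_finite_verts[OF assms] fE] by simp
qed

section \<open>The greedy bound\<close>

text \<open>The maximum of \<Sum>i. x_i (x_i + 1) over finitely many x_i \<le> m with \<Sum>i. x_i = S,
  attained by S div m parts equal to m and one part S mod m. With x_v = d(v) - 1 this is
  twice the number of line-graph edges.\<close>

definition greedy_fill :: "nat \<Rightarrow> nat \<Rightarrow> nat" where
  "greedy_fill m S = (S div m) * m * (m + 1) + (S mod m) * (S mod m + 1)"

lemma greedy_fill_eq: "r < m \<Longrightarrow> greedy_fill m (q * m + r) = q * m * (m + 1) + r * (r + 1)"
  unfolding greedy_fill_def by auto

lemma greedy_fill_add_cap: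
  assumes "m \<ge> 1"
  shows "greedy_fill m (S + m) = greedy_fill m S + m * (m + 1)"
  using assms unfolding greedy_fill_def by (simp add: algebra_simps)

lemma greedy_fill_Suc:
  assumes m: "m \<ge> 1"
  shows "greedy_fill m (S + 1) = greedy_fill m S + 2 * (1 + S mod m)"
proof -
  define q k where "q = S div m" and "k = S mod m"
  have S: "S = q * m + k" and km: "k < m" using m unfolding q_def k_def by auto
  have G: "greedy_fill m S = q * m * (m + 1) + k * (k + 1)" using greedy_fill_eq[OF km] S by simp
  show ?thesis
  proof (cases "k + 1 < m")
    case True
    have "greedy_fill m (S + 1) = q * m * (m + 1) + (k + 1) * (k + 1 + 1)"
      using greedy_fill_eq[OF True, of q] S by (simp add: add.assoc)
    moreover have "(k + 1) * (k + 1 + 1) = k * (k + 1) + 2 * (1 + k)" by (simp add: algebra_simps)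
    ultimately show ?thesis using G unfolding k_def by linarith
  next
    case False
    then have m_eq: "m = k + 1" using km by simp
    then have "S + 1 = (q + 1) * m + 0" using S by simp
    then have "greedy_fill m (S + 1) = (q + 1) * m * (m + 1)"
      using greedy_fill_eq[of 0 m "q + 1"] m by (simp only:)
    moreover have "(q + 1) * m * (m + 1) = q * m * (m + 1) + k * (k + 1) + 2 * (1 + k)"
      unfolding m_eq by (simp add: algebra_simps)
    ultimately show ?thesis using G unfolding k_def by linarith
  qed
qed

lemma greedy_fill_mono:
  assumes "m \<ge> 1" "S \<le> S'"
  shows "greedy_fill m S \<le> greedy_fill m S'"
  using assms(2)
proof (induction S' rule: dec_induct)
  case (step S')
  then show ?case using greedy_fill_Suc[OF assms(1), of S'] by simp
qed simp

text \<open>Convexity of n (n + 1): moving two parts with fixed sum apart gains 2 (m - k) (m - x).\<close>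

lemma pronic_sum_le_spread:
  fixes k x m r :: nat
  assumes "k + x = m + r" "k \<le> m" "x \<le> m"
  shows "k * (k + 1) + x * (x + 1) \<le> m * (m + 1) + r * (r + 1)"
proof -
  have r: "int r = int k + int x - int m" using assms(1) by simp
  have "int m * (int m + 1) + int r * (int r + 1)
      = int k * (int k + 1) + int x * (int x + 1) + 2 * ((int m - int k) * (int m - int x))"
    unfolding r by (simp add: algebra_simps)
  moreover have "(int m - int k) * (int m - int x) \<ge> 0" using assms(2,3) by simp
  ultimately have "int k * (int k + 1) + int x * (int x + 1) \<le> int m * (int m + 1) + int r * (int r + 1)"
    by linarith
  then have "int (k * (k + 1) + x * (x + 1)) \<le> int (m * (m + 1) + r * (r + 1))"
    by (simp add: algebra_simps)
  then show ?thesis by (simp only: of_nat_le_iff)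
qed

lemma greedy_fill_add:
  assumes m: "m \<ge> 1" and x: "x \<le> m"
  shows "greedy_fill m S + x * (x + 1) \<le> greedy_fill m (S + x)"
proof -
  define q k where "q = S div m" and "k = S mod m"
  have S: "S = q * m + k" and km: "k < m" using m unfolding q_def k_def by auto
  have G: "greedy_fill m S = q * m * (m + 1) + k * (k + 1)" using greedy_fill_eq[OF km] S by simp
  show ?thesis
  proof (cases "k + x < m")
    case True
    have "greedy_fill m (S + x) = q * m * (m + 1) + (k + x) * (k + x + 1)"
      using greedy_fill_eq[OF True, of q] S by (simp add: add.assoc)
    moreover have "(k + x) * (k + x + 1) = k * (k + 1) + x * (x + 1) + 2 * k * x"
      by (simp add: algebra_simps)
    ultimately show ?thesis using G by simp
  next
    case False
    then obtain r where r: "k + x = m + r" by (metis le_add_diff_inverse not_less)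
    have rm: "r < m" using r km x by linarith
    have overflow: "k * (k + 1) + x * (x + 1) \<le> m * (m + 1) + r * (r + 1)"
      using pronic_sum_le_spread[OF r] km x by simp
    have "S + x = (q + 1) * m + r" using S r by simp
    then have "greedy_fill m (S + x) = (q + 1) * m * (m + 1) + r * (r + 1)"
      using greedy_fill_eq[OF rm, of "q + 1"] by (simp only:)
    moreover have "(q + 1) * m * (m + 1) = q * m * (m + 1) + m * (m + 1)" by (simp add: algebra_simps)
    ultimately show ?thesis using G overflow by linarith
  qed
qed

lemma sum_le_greedy_fill:
  assumes m: "m \<ge> 1" and "finite A" and "\<forall>v\<in>A. f v \<le> m"
  shows "(\<Sum>v\<in>A. f v * (f v + 1)) \<le> greedy_fill m (\<Sum>v\<in>A. f v)"
  using assms(2,3)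
proof (induction A rule: finite_induct)
  case empty
  then show ?case by (simp add: greedy_fill_def)
next
  case (insert a A)
  then have "(\<Sum>v\<in>insert a A. f v * (f v + 1)) \<le> greedy_fill m (\<Sum>v\<in>A. f v) + f a * (f a + 1)"
    by simp
  also have "\<dots> \<le> greedy_fill m ((\<Sum>v\<in>A. f v) + f a)" using greedy_fill_add[OF m] insert.prems by simp
  finally show ?case using insert by (simp add: add.commute)
qed

lemma greedy_fill_le_Suc_cap:
  assumes m: "m \<ge> 1"
  shows "greedy_fill m S \<le> greedy_fill (m + 1) S"
proof -
  define q k where "q = S div m" and "k = S mod m"
  have S: "S = q * m + k" and km: "k < m" using m unfolding q_def k_def by auto
  define f where "f i = (if i < q then m else k)" for i
  have "(\<Sum>i<Suc q. f i) = S" unfolding f_def S by simp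
  moreover have "(\<Sum>i<Suc q. f i * (f i + 1)) = greedy_fill m S"
    unfolding f_def greedy_fill_eq[OF km, of q, folded S] by (simp add: algebra_simps)
  moreover have "\<forall>i\<in>{..<Suc q}. f i \<le> m + 1" unfolding f_def using km by simp
  ultimately show ?thesis using sum_le_greedy_fill[of "m + 1" "{..<Suc q}" f] by simp
qed

text \<open>Split off m + 1 units: under cap m they add at most m (m + 1) + 2 m, under cap m + 1
  they form one full part worth (m + 1) (m + 2), which is 2 more.\<close>

lemma greedy_fill_Suc_cap:
  assumes m: "m \<ge> 1" and S: "S \<ge> m + 1"
  shows "greedy_fill m S + 2 \<le> greedy_fill (m + 1) S"
proof -
  define T where "T = S - (m + 1)"
  have "greedy_fill m S = greedy_fill m ((T + 1) + m)" using S unfolding T_def by simp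
  also have "\<dots> = greedy_fill m T + 2 * (1 + T mod m) + m * (m + 1)"
    using greedy_fill_add_cap[OF m] greedy_fill_Suc[OF m] by simp
  also have "\<dots> + 2 \<le> greedy_fill m T + (m + 1) * (m + 2)"
  proof -
    have "2 * (1 + t) + m * (m + 1) + 2 \<le> (m + 1) * (m + 2)" if "t < m" for t
      using that by (simp add: algebra_simps)
    from this[of "T mod m"] have "2 * (1 + T mod m) + m * (m + 1) + 2 \<le> (m + 1) * (m + 2)"
      using m by simp
    then show ?thesis by linarith
  qed
  also have "\<dots> \<le> greedy_fill (m + 1) T + (m + 1) * (m + 2)"
    using greedy_fill_le_Suc_cap[OF m, of T] by simp
  also have "\<dots> = greedy_fill (m + 1) (T + (m + 1))"
    using greedy_fill_add_cap[of "m + 1" T] by (simp add: algebra_simps)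
  also have "T + (m + 1) = S" using S unfolding T_def by simp
  finally show ?thesis .
qed

section \<open>Extremal forests\<close>

lemma two_mult_choose_two: "2 * (d choose 2) = d * (d - 1)"
proof -
  have "even (d * (d - 1))" by (cases "even d") simp_all
  then show ?thesis unfolding choose_two by simp
qed

lemma two_eL_le_greedy_fill:
  assumes m: "m \<ge> 1" and ac: "acyclic_graph F" and ne: "F \<noteq> {}" and md: "max_degree F \<le> m + 1"
  shows "2 * eL F \<le> greedy_fill m (card F - 1)"
proof -
  have sg: "simple_graph F" using ac unfolding acyclic_graph_def by simp
  then have fF: "finite F" unfolding simple_graph_def by simp
  define V where "V = verts F"
  have fV: "finite V" using simple_graph_finite_verts[OF sg] V_def by simp
  define x where "x v = degree F v - 1" for v
  have dx: "degree F v = x v + 1" if "v \<in> V" for v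
    using degree_ge_1[OF fF] that unfolding V_def x_def by fastforce
  have xm: "\<forall>v\<in>V. x v \<le> m" using degree_le_max_degree[OF sg] md unfolding V_def x_def by fastforce
  have "2 * eL F = (\<Sum>v\<in>V. 2 * (degree F v choose 2))"
    unfolding eL_eq_sum_choose_degree[OF sg] V_def by (simp add: sum_distrib_left)
  also have "\<dots> = (\<Sum>v\<in>V. x v * (x v + 1))"
    by (rule sum.cong) (simp_all add: two_mult_choose_two dx)
  also have "\<dots> \<le> greedy_fill m (\<Sum>v\<in>V. x v)" using sum_le_greedy_fill[OF m fV xm] .
  also have "\<dots> \<le> greedy_fill m (card F - 1)"
  proof (rule greedy_fill_mono[OF m])
    have "(\<Sum>v\<in>V. x v) + card V = (\<Sum>v\<in>V. x v + 1)" unfolding sum.distrib by simp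
    also have "\<dots> = 2 * card F" using sum_degree_verts[OF sg] dx unfolding V_def by simp
    finally have "(\<Sum>v\<in>V. x v) + card V = 2 * card F" .
    moreover have "card F + 1 \<le> card V" using acyclic_graph_card_verts[OF ac ne] V_def by simp
    ultimately show "(\<Sum>v\<in>V. x v) \<le> card F - 1" by linarith
  qed
  finally show ?thesis .
qed

text \<open>Vertex 1 hangs below 0 and vertex v \<ge> 2 below the spine vertex ((v - 2) div m) * m + 1,
  so the spine 0, 1, m + 1, 2 m + 1, ... is filled up to degree m + 1 one vertex at a time.\<close>

definition spine_parent :: "nat \<Rightarrow> nat \<Rightarrow> nat" where
  "spine_parent m v = (if v \<le> 1 then 0 else ((v - 2) div m) * m + 1)"

definition caterpillar :: "nat \<Rightarrow> nat \<Rightarrow> nat set set" where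
  "caterpillar m n = (\<lambda>v. {v, spine_parent m v}) ` {1..n}"

lemma spine_parent_less:
  assumes "v \<ge> 1"
  shows "spine_parent m v < v"
proof (cases "v \<le> 1")
  case False
  have "((v - 2) div m) * m \<le> v - 2" by (simp add: div_times_less_eq_dividend)
  moreover have "spine_parent m v = ((v - 2) div m) * m + 1" using False unfolding spine_parent_def by simp
  ultimately show ?thesis using False by linarith
qed (use assms in \<open>simp add: spine_parent_def\<close>)

lemma div_mod_pred:
  fixes n m :: nat
  assumes "n mod m \<noteq> 0"
  shows "(n - 1) div m = n div m" "n mod m = Suc ((n - 1) mod m)"
proof -
  obtain k where n: "n = Suc k" using assms by (cases n) auto
  have "Suc (k mod m) \<noteq> m" using assms mod_Suc[of k m] n by auto
  then show "(n - 1) div m = n div m" "n mod m = Suc ((n - 1) mod m)"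
    using n div_Suc[of k m] mod_Suc[of k m] by auto
qed

lemma spine_parent_Suc:
  assumes "n \<ge> 1" "n mod m \<noteq> 0"
  shows "spine_parent m (n + 2) = spine_parent m (n + 1)"
  using assms div_mod_pred(1)[OF assms(2)] unfolding spine_parent_def by simp

lemma caterpillar_Suc:
  "caterpillar m (Suc n) = insert {Suc n, spine_parent m (Suc n)} (caterpillar m n)"
  unfolding caterpillar_def by (simp add: atLeastAtMostSuc_conv)

lemma verts_caterpillar: "verts (caterpillar m n) \<subseteq> {..n}"
proof
  fix x assume "x \<in> verts (caterpillar m n)"
  then obtain v where "v \<in> {1..n}" "x \<in> {v, spine_parent m v}"
    unfolding verts_def caterpillar_def by auto
  then show "x \<in> {..n}" using spine_parent_less[of v m] by auto
qed

lemma caterpillar_new_vertex: "Suc n \<notin> verts (caterpillar m n)"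
  using verts_caterpillar by fastforce

lemma acyclic_caterpillar: "acyclic_graph (caterpillar m n)"
proof (induction n)
  case 0
  then show ?case unfolding caterpillar_def acyclic_graph_def simple_graph_def has_cycle_def by simp
next
  case (Suc n)
  have "spine_parent m (Suc n) \<noteq> Suc n" using spine_parent_less[of "Suc n" m] by simp
  then have "acyclic_graph (insert {spine_parent m (Suc n), Suc n} (caterpillar m n))"
    using acyclic_graph_insert_pendant[OF Suc.IH _ caterpillar_new_vertex] by blast
  then show ?case unfolding caterpillar_Suc by (simp add: insert_commute)
qed

lemma finite_caterpillar: "finite (caterpillar m n)"
  unfolding caterpillar_def by simp

lemma caterpillar_edge_notin: "{Suc n, spine_parent m (Suc n)} \<notin> caterpillar m n"
  using caterpillar_new_vertex unfolding verts_def by blast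

lemma card_caterpillar: "card (caterpillar m n) = n"
proof (induction n)
  case 0
  then show ?case unfolding caterpillar_def by simp
next
  case (Suc n)
  then show ?case unfolding caterpillar_Suc using caterpillar_edge_notin[of n m] finite_caterpillar by simp
qed

lemma degree_caterpillar_Suc:
  "degree (caterpillar m (Suc n)) u
    = degree (caterpillar m n) u + (if u = Suc n \<or> u = spine_parent m (Suc n) then 1 else 0)"
  unfolding caterpillar_Suc using degree_insert[OF caterpillar_edge_notin finite_caterpillar] by simp

lemma degree_caterpillar_next_parent:
  assumes n: "n \<ge> 1"
  shows "degree (caterpillar m n) (spine_parent m (n + 1)) = 1 + (n - 1) mod m"
  using n
proof (induction n rule: nat_induct_at_least)
  case base
  have "caterpillar m 1 = {{1, 0}}" unfolding caterpillar_def spine_parent_def by simp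
  moreover have "spine_parent m (Suc (Suc 0)) = 1" unfolding spine_parent_def by simp
  moreover have "{e \<in> {{1::nat, 0}}. 1 \<in> e} = {{1, 0}}" by auto
  ultimately show ?case unfolding degree_def by simp
next
  case (Suc n)
  show ?case
  proof (cases "n mod m = 0")
    case True
    then have "(n div m) * m = n" by (metis div_mult_mod_eq add_0_right)
    then have "spine_parent m (Suc n + 1) = n + 1" unfolding spine_parent_def by simp
    moreover have "degree (caterpillar m n) (n + 1) = 0"
      using caterpillar_new_vertex degree_notin_verts by simp
    ultimately show ?thesis using True degree_caterpillar_Suc[of m n "n + 1"] by simp
  next
    case False
    have "spine_parent m (n + 1) \<noteq> Suc n" using spine_parent_less[of "n + 1" m] by simp
    then show ?thesis using Suc.IH spine_parent_Suc[OF Suc.hyps False] div_mod_pred(2)[OF False]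
        degree_caterpillar_Suc[of m n "spine_parent m (n + 1)"] by simp
  qed
qed

lemma degree_caterpillar_le:
  assumes m: "m \<ge> 1"
  shows "degree (caterpillar m n) u \<le> m + 1"
proof (induction n)
  case 0
  then show ?case unfolding caterpillar_def degree_def by simp
next
  case (Suc n)
  consider "u = Suc n" | "u = spine_parent m (Suc n)" "n \<ge> 1" | "u = spine_parent m (Suc n)" "n = 0"
    | "u \<noteq> Suc n" "u \<noteq> spine_parent m (Suc n)" by linarith
  then show ?case
  proof cases
    case 1
    then show ?thesis using degree_caterpillar_Suc[of m n u] caterpillar_new_vertex degree_notin_verts
      by simp
  next
    case 2
    then have "degree (caterpillar m n) u \<le> m"
      using degree_caterpillar_next_parent[of n m] mod_less_divisor[of m "n - 1"] m by fastforce
    then show ?thesis using degree_caterpillar_Suc[of m n u] by simp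
  next
    case 3
    then show ?thesis using degree_caterpillar_Suc[of m n u] by (simp add: caterpillar_def degree_def)
  next
    case 4
    then show ?thesis using degree_caterpillar_Suc[of m n u] Suc.IH by simp
  qed
qed

lemma max_degree_caterpillar:
  assumes m: "m \<ge> 1" and n: "n \<ge> m + 1"
  shows "max_degree (caterpillar m n) = m + 1"
proof (rule max_degree_eqI)
  have "spine_parent m (m + 1) = 1" unfolding spine_parent_def using m by simp
  then have "degree (caterpillar m (Suc m)) 1 = m + 1"
    using degree_caterpillar_next_parent[of m m] degree_caterpillar_Suc[of m m 1] m by simp
  moreover have "caterpillar m (Suc m) \<subseteq> caterpillar m n" unfolding caterpillar_def using n by auto
  ultimately have "m + 1 \<le> degree (caterpillar m n) 1" using degree_mono finite_caterpillar by metis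
  then show "degree (caterpillar m n) 1 = m + 1" using degree_caterpillar_le[OF m] le_antisym by blast
  then show "1 \<in> verts (caterpillar m n)" using degree_notin_verts by fastforce
qed (use acyclic_caterpillar degree_caterpillar_le[OF m] in \<open>auto simp: acyclic_graph_def\<close>)

lemma two_eL_caterpillar:
  assumes m: "m \<ge> 1" and n: "n \<ge> 1"
  shows "2 * eL (caterpillar m n) = greedy_fill m (n - 1)"
  using n
proof (induction n rule: nat_induct_at_least)
  case base
  have "caterpillar m 1 = {{1, 0}}" unfolding caterpillar_def spine_parent_def by simp
  moreover have "line_graph_edges {{1::nat, 0}} = {}" unfolding line_graph_edges_def by auto
  ultimately show ?case unfolding eL_def greedy_fill_def by simp
next
  case (Suc n)
  have "eL (caterpillar m (Suc n)) = eL (caterpillar m n) + degree (caterpillar m n) (spine_parent m (Suc n))"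
    unfolding caterpillar_Suc
    using eL_insert_pendant[OF finite_caterpillar caterpillar_new_vertex, where u = "spine_parent m (Suc n)"]
    by (simp add: insert_commute)
  then have "2 * eL (caterpillar m (Suc n)) = greedy_fill m (n - 1) + 2 * (1 + (n - 1) mod m)"
    using Suc.IH degree_caterpillar_next_parent[OF Suc.hyps] by simp
  also have "\<dots> = greedy_fill m (n - 1 + 1)" using greedy_fill_Suc[OF m] by simp
  finally show ?case using Suc.hyps by simp
qed

definition matching :: "nat \<Rightarrow> nat set set" where
  "matching n = (\<lambda>i. {2 * i, 2 * i + 1}) ` {..<n}"

lemma acyclic_matching: "acyclic_graph (matching n)"
proof (induction n)
  case 0
  then show ?case unfolding matching_def acyclic_graph_def simple_graph_def has_cycle_def by simp
next
  case (Suc n)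
  have "2 * n + 1 \<notin> verts (matching n)" unfolding matching_def verts_def by auto
  then show ?case unfolding matching_def lessThan_Suc image_insert
    using acyclic_graph_insert_pendant[OF Suc.IH[unfolded matching_def]] by simp
qed

lemma card_matching: "card (matching n) = n"
proof -
  have "inj_on (\<lambda>i. {2 * i, 2 * i + 1}) {..<n}" by (rule inj_onI) (auto simp: doubleton_eq_iff)
  then show ?thesis unfolding matching_def by (simp add: card_image)
qed

lemma degree_matching_le_1: "degree (matching n) v \<le> 1"
proof -
  have "{e\<in>matching n. v \<in> e} \<subseteq> {{2 * (v div 2), 2 * (v div 2) + 1}}" unfolding matching_def by auto
  then show ?thesis unfolding degree_def using card_mono[of "{{2 * (v div 2), 2 * (v div 2) + 1}}"] by fastforce
qed

lemma max_degree_matching: "n \<ge> 1 \<Longrightarrow> max_degree (matching n) = 1"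
proof (rule max_degree_eqI)
  assume "n \<ge> 1"
  then have "{0, 1} \<in> matching n" unfolding matching_def by force
  then show "0 \<in> verts (matching n)" unfolding verts_def by blast
  then show "degree (matching n) 0 = 1"
    using degree_ge_1[of "matching n"] degree_matching_le_1 le_antisym unfolding matching_def by blast
qed (use acyclic_matching degree_matching_le_1 in \<open>auto simp: acyclic_graph_def\<close>)

section \<open>Values of g\<close>

lemma g_eqI:
  assumes "acyclic_graph F" "card F = N" "max_degree F = D"
    and "\<And>F'. acyclic_graph F' \<Longrightarrow> card F' = N \<Longrightarrow> max_degree F' = D \<Longrightarrow> eL F' \<le> eL F"
  shows "g N D = eL F"
  unfolding g_def
proof (rule Max_eqI)
  show "finite {eL F | F. acyclic_graph F \<and> card F = N \<and> max_degree F = D}"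
    by (rule finite_subset[of _ "{..eL F}"]) (auto dest: assms(4))
qed (use assms in auto)

lemma g_max_degree_1:
  assumes "N \<ge> 1"
  shows "g N 1 = 0"
proof -
  have "eL F = 0" if "acyclic_graph F" "max_degree F = 1" for F
    using that eL_eq_0_of_max_degree_le_1 unfolding acyclic_graph_def by simp
  then show ?thesis
    using g_eqI[OF acyclic_matching card_matching max_degree_matching[OF assms]] acyclic_matching
      max_degree_matching[OF assms] by simp
qed

lemma two_g_eq_greedy_fill:
  assumes m: "m \<ge> 1" and N: "N \<ge> m + 1"
  shows "2 * g N (m + 1) = greedy_fill m (N - 1)"
proof -
  have "g N (m + 1) = eL (caterpillar m N)"
  proof (rule g_eqI[OF acyclic_caterpillar card_caterpillar max_degree_caterpillar[OF m N]])
    fix F assume "acyclic_graph F" "card F = N" "max_degree F = m + 1"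
    then have "2 * eL F \<le> greedy_fill m (N - 1)" using two_eL_le_greedy_fill[OF m] N by fastforce
    then show "eL F \<le> eL (caterpillar m N)" using two_eL_caterpillar[OF m, of N] N by simp
  qed
  then show ?thesis using two_eL_caterpillar[OF m] N by simp
qed

lemma g_closed_form:
  assumes D: "D \<ge> 2" and N: "N \<ge> D" and k: "(N - 1) mod (D - 1) = k"
  shows "real (g N D) = (real N - real k - 1) * real D / 2 + real ((k + 1) choose 2)"
proof -
  define m q where "m = D - 1" and "q = (N - 1) div m"
  have Nq: "N - 1 = q * m + k" using div_mult_mod_eq[of "N - 1" m] k unfolding q_def m_def by simp
  have km: "k < m" using k D unfolding m_def by auto
  have "2 * g N D = q * m * (m + 1) + k * (k + 1)"
    using two_g_eq_greedy_fill[of m N] greedy_fill_eq[OF km] D N Nq unfolding m_def by simp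
  moreover have "2 * ((k + 1) choose 2) = (k + 1) * k" using two_mult_choose_two[of "k + 1"] by simp
  moreover have "N = q * m + k + 1" "D = m + 1" using Nq N D unfolding m_def by auto
  ultimately show ?thesis
    by (simp add: field_simps flip: of_nat_mult of_nat_add)
qed

lemma closed_form_le:
  assumes "k + 1 \<le> D"
  shows "(real N - real k - 1) * real D / 2 + real ((k + 1) choose 2) \<le> (real N - 1) * real D / 2"
proof -
  have "2 * ((k + 1) choose 2) = (k + 1) * k" using two_mult_choose_two[of "k + 1"] by simp
  moreover have "(k + 1) * k \<le> D * k" using mult_le_mono1[OF assms] .
  ultimately have "2 * real ((k + 1) choose 2) \<le> real D * real k" by (simp flip: of_nat_mult)
  then show ?thesis by (simp add: field_simps)
qed

lemma g_Suc_edges: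
  assumes "D \<ge> 2" "N \<ge> D"
  shows "g N D + 1 \<le> g (N + 1) D"
proof -
  define m where "m = D - 1"
  have m: "m \<ge> 1" and D: "D = m + 1" using assms(1) unfolding m_def by auto
  have "2 * g (N + 1) D = greedy_fill m (N - 1 + 1)"
    using two_g_eq_greedy_fill[OF m, of "N + 1"] assms D by simp
  also have "\<dots> = greedy_fill m (N - 1) + 2 * (1 + (N - 1) mod m)" by (rule greedy_fill_Suc[OF m])
  also have "greedy_fill m (N - 1) = 2 * g N D" using two_g_eq_greedy_fill[OF m, of N] assms D by simp
  finally show ?thesis by simp
qed

lemma g_Suc_max_degree:
  assumes "D \<ge> 1" "N > D"
  shows "g N D + 1 \<le> g N (D + 1)"
proof (cases "D = 1")
  case True
  have "2 * g N 2 = greedy_fill 1 (N - 1)"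
    using two_g_eq_greedy_fill[of 1 N, unfolded one_add_one] assms True by simp
  then have "g N 2 = N - 1" by (simp add: greedy_fill_def)
  moreover have "g N 1 = 0" using assms by (intro g_max_degree_1) simp
  ultimately show ?thesis using assms True by (simp add: numeral_2_eq_2)
next
  case False
  define m where "m = D - 1"
  have m: "m \<ge> 1" and D: "D = m + 1" using assms(1) False unfolding m_def by auto
  have "2 * g N D + 2 = greedy_fill m (N - 1) + 2" using two_g_eq_greedy_fill[OF m, of N] assms D by simp
  also have "\<dots> \<le> greedy_fill (m + 1) (N - 1)" using greedy_fill_Suc_cap[OF m] assms D by simp
  also have "\<dots> = 2 * g N (D + 1)" using two_g_eq_greedy_fill[of "m + 1" N] assms D by simp
  finally show ?thesis by simp
qed

theorem mainTheorem7:
  fixes N D :: nat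
  assumes "N \<ge> D" and "D \<ge> 1"
  shows "g N 1 = 0
    \<and> (\<forall>k::nat. D \<ge> 2 \<longrightarrow> [N - 1 = k] (mod (D - 1)) \<longrightarrow> k \<le> D - 2 \<longrightarrow>
         real (g N D) = (real N - real k - 1) * real D / 2 + real ((k + 1) choose 2)
         \<and> (real N - real k - 1) * real D / 2 + real ((k + 1) choose 2) \<le> (real N - 1) * real D / 2)
    \<and> (D \<ge> 2 \<longrightarrow> g (N + 1) D \<ge> g N D + 1)
    \<and> (N > D \<longrightarrow> g N (D + 1) \<ge> g N D + 1)"
proof (intro conjI allI impI)
  show "g N 1 = 0" using assms by (intro g_max_degree_1) simp
next
  fix k :: nat
  assume D: "D \<ge> 2" and "[N - 1 = k] (mod (D - 1))" and k: "k \<le> D - 2"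
  then have "(N - 1) mod (D - 1) = k" unfolding cong_def by simp
  then show "real (g N D) = (real N - real k - 1) * real D / 2 + real ((k + 1) choose 2)"
    using g_closed_form D assms(1) by blast
  show "(real N - real k - 1) * real D / 2 + real ((k + 1) choose 2) \<le> (real N - 1) * real D / 2"
    using closed_form_le k D by simp
next
  show "D \<ge> 2 \<Longrightarrow> g (N + 1) D \<ge> g N D + 1" using g_Suc_edges assms(1) by blast
next
  show "N > D \<Longrightarrow> g N (D + 1) \<ge> g N D + 1" using g_Suc_max_degree assms(2) by blast
qed

end
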